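(* Let $L\ge1$ and $q\in\{2,\dots,L\}$ be integers, $\delta\in(0,1)$, $k=\lceil L/\delta\rceil$, and $s,d\ge1$. Let $I$ be an $(s,d)$-decent instance of Min Weight Generalized Domination with Gaifman graph $G$ and minimum solution cost $\mathsf{OPT}$. Let $V_0,\dots,V_{k-1}\subseteq V(G)$ be such that $N_G[V_0],\dots,N_G[V_{k-1}]$ are pairwise disjoint, let $I_i=\mathsf{Clear}(I;V_i)$ with minimum solution cost $\mathsf{OPT}_i$, and let reals $p_i$ satisfy $(1-\delta\frac{q-1}{L})\mathsf{OPT}_i\le p_i\le\mathsf{OPT}_i$ for every $i$. Then $p=\max(p_0,\dots,p_{k-1})$ satisfies $(1-\delta\frac{q}{L})\mathsf{OPT}\le p\le\mathsf{OPT}$.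
   Context: An instance of Min Weight Generalized Domination consists of a loopless multigraph $G$ and for every vertex $u$: a finite domain $D_u$, $\mathsf{cost}_u\colon D_u\to\mathbb{R}_{\ge0}\cup\{+\infty\}$, and $\mathsf{supply}_u,\mathsf{demand}_u\colon D_u\to 2^{\delta(u)}$ ($\delta(u)$ = edges incident to $u$), with some $s_u\in D_u$ having $\mathsf{supply}_u(s_u)=\delta(u)$ and finite cost. A solution is $\phi$ with $\phi(u)\in D_u$ such that for every edge $e$ with endpoints $u,v$, $e\in\mathsf{demand}_u(\phi(u))\Rightarrow e\in\mathsf{supply}_v(\phi(v))$ and $e\in\mathsf{demand}_v(\phi(v))\Rightarrow e\in\mathsf{supply}_u(\phi(u))$; cost $\sum_u\mathsf{cost}_u(\phi(u))$. A vertex is $(s,d)$-meager if $|\delta(u)|\le s$ and $|D_u|\le d$; state-monotonous if for all ordered $x_1,x_2\in D_u$ there is $x\in D_u$ with $\mathsf{cost}_u(x)\le\mathsf{cost}_u(x_1)+\mathsf{cost}_u(x_2)$, $\mathsf{supply}_u(x)=\mathsf{supply}_u(x_1)\cup\mathsf{supply}_u(x_2)$, $\mathsf{demand}_u(x)\subseteq\mathsf{demand}_u(x_1)$; $(s,d)$-decent means all vertices are $(s,d)$-meager and state-monotonous. $N_G[A]$ is the closed neighborhood of $A$. $\mathsf{Clear}(I;A)$ is obtained by deleting all edges with both endpoints in $A$ (also from supply and demand sets) and then setting $\mathsf{demand}_u(x)=\emptyset$ for all $u\in A$, $x\in D_u$. *)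

theory Defs
  imports "HOL-Library.Extended_Real"
begin

text \<open>An instance of Min Weight Generalized Domination: a loopless multigraph
(vertex set, edge set, endpoint map with exactly two distinct endpoints per edge)
together with, for every vertex, a domain of states, a cost function into
nonnegative extended reals (possibly +infinity), and supplies/demands maps.\<close>

record ('v,'e,'s) gdinst =
  verts  :: "'v set"
  edges  :: "'e set"
  ends   :: "'e \<Rightarrow> 'v set"
  doms    :: "'v \<Rightarrow> 's set"
  cost   :: "'v \<Rightarrow> 's \<Rightarrow> ereal"
  supplies :: "'v \<Rightarrow> 's \<Rightarrow> 'e set"
  demands :: "'v \<Rightarrow> 's \<Rightarrow> 'e set"

definition inc_edges :: "('v,'e,'s) gdinst \<Rightarrow> 'v \<Rightarrow> 'e set" where
  "inc_edges I u = {e \<in> edges I. u \<in> ends I e}"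

definition wf_inst :: "('v,'e,'s) gdinst \<Rightarrow> bool" where
  "wf_inst I \<longleftrightarrow>
     finite (verts I) \<and> finite (edges I) \<and>
     (\<forall>e\<in>edges I. ends I e \<subseteq> verts I \<and> card (ends I e) = 2) \<and>
     (\<forall>u\<in>verts I. finite (doms I u) \<and>
        (\<forall>x\<in>doms I u. cost I u x \<ge> 0 \<and> supplies I u x \<subseteq> inc_edges I u
                      \<and> demands I u x \<subseteq> inc_edges I u) \<and>
        (\<exists>x\<in>doms I u. supplies I u x = inc_edges I u \<and> cost I u x < \<infinity>))"

definition is_solution :: "('v,'e,'s) gdinst \<Rightarrow> ('v \<Rightarrow> 's) \<Rightarrow> bool" where
  "is_solution I \<phi> \<longleftrightarrow>
     (\<forall>u\<in>verts I. \<phi> u \<in> doms I u) \<and>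
     (\<forall>e\<in>edges I. \<forall>u\<in>ends I e. \<forall>v\<in>ends I e. u \<noteq> v \<longrightarrow>
        (e \<in> demands I u (\<phi> u) \<longrightarrow> e \<in> supplies I v (\<phi> v)))"

definition sol_cost :: "('v,'e,'s) gdinst \<Rightarrow> ('v \<Rightarrow> 's) \<Rightarrow> ereal" where
  "sol_cost I \<phi> = (\<Sum>u\<in>verts I. cost I u (\<phi> u))"

text \<open>Minimum solution cost (the set of attained values is finite for well-formed
instances, so the infimum is a minimum).\<close>
definition OPT :: "('v,'e,'s) gdinst \<Rightarrow> ereal" where
  "OPT I = (INF \<phi> \<in> {\<phi>. is_solution I \<phi>}. sol_cost I \<phi>)"

definition meager :: "nat \<Rightarrow> nat \<Rightarrow> ('v,'e,'s) gdinst \<Rightarrow> 'v \<Rightarrow> bool" where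
  "meager s d I u \<longleftrightarrow> card (inc_edges I u) \<le> s \<and> card (doms I u) \<le> d"

definition state_monotonous :: "('v,'e,'s) gdinst \<Rightarrow> 'v \<Rightarrow> bool" where
  "state_monotonous I u \<longleftrightarrow>
     (\<forall>x1\<in>doms I u. \<forall>x2\<in>doms I u. \<exists>x\<in>doms I u.
        cost I u x \<le> cost I u x1 + cost I u x2 \<and>
        supplies I u x = supplies I u x1 \<union> supplies I u x2 \<and>
        demands I u x \<subseteq> demands I u x1)"

definition decent :: "nat \<Rightarrow> nat \<Rightarrow> ('v,'e,'s) gdinst \<Rightarrow> bool" where
  "decent s d I \<longleftrightarrow> (\<forall>u\<in>verts I. meager s d I u \<and> state_monotonous I u)"

definition closed_nbhd :: "('v,'e,'s) gdinst \<Rightarrow> 'v set \<Rightarrow> 'v set" where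
  "closed_nbhd I A = A \<union> {v \<in> verts I. \<exists>e\<in>edges I. \<exists>u\<in>A. u \<in> ends I e \<and> v \<in> ends I e}"

definition clear :: "('v,'e,'s) gdinst \<Rightarrow> 'v set \<Rightarrow> ('v,'e,'s) gdinst" where
  "clear I A =
     (let E' = {e \<in> edges I. \<not> ends I e \<subseteq> A} in
      I\<lparr> edges := E',
         supplies := (\<lambda>u x. supplies I u x \<inter> E'),
         demands := (\<lambda>u x. if u \<in> A then {} else demands I u x \<inter> E') \<rparr>)"

end

theory Submission imports Defs "HOL-Library.FuncSet" begin

text \<open>Fix an optimal solution \<open>\<phi>\<close> of \<open>I\<close>. Clearing only relaxes constraints, so
\<open>OPT\<^sub>i \<le> OPT\<close>. Conversely, an optimal solution \<open>\<psi>\<close> of \<open>Clear(I;V\<^sub>i)\<close> can be repaired into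
a solution of \<open>I\<close> by merging, via state-monotonicity, the states of \<open>\<phi>\<close> and \<open>\<psi>\<close> on
\<open>N[V\<^sub>i]\<close>; this costs at most \<open>c\<^sub>i\<close>, the cost of \<open>\<phi>\<close> on \<open>N[V\<^sub>i]\<close>. Hence
\<open>OPT \<le> OPT\<^sub>i + c\<^sub>i\<close>. The neighbourhoods are disjoint, so \<open>\<Sum> c\<^sub>i \<le> OPT\<close> and some
\<open>c\<^sub>i \<le> OPT/k \<le> (\<delta>/L) OPT\<close>; for this \<open>i\<close>,
\<open>p \<ge> p\<^sub>i \<ge> (1 - \<delta>(q-1)/L)(1 - \<delta>/L) OPT \<ge> (1 - \<delta>q/L) OPT\<close>.\<close>

lemma clear_simps [simp]:
  "verts (clear I A) = verts I" "doms (clear I A) = doms I" "cost (clear I A) = cost I"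
  "ends (clear I A) = ends I" "edges (clear I A) = {e \<in> edges I. \<not> ends I e \<subseteq> A}"
  "supplies (clear I A) u x = supplies I u x \<inter> {e \<in> edges I. \<not> ends I e \<subseteq> A}"
  "demands (clear I A) u x =
     (if u \<in> A then {} else demands I u x \<inter> {e \<in> edges I. \<not> ends I e \<subseteq> A})"
  by (simp_all add: clear_def Let_def)

lemma is_solution_clear: "is_solution I \<phi> \<Longrightarrow> is_solution (clear I A) \<phi>"
  unfolding is_solution_def by auto

lemma sol_cost_clear [simp]: "sol_cost (clear I A) \<phi> = sol_cost I \<phi>"
  unfolding sol_cost_def by simp

lemma inc_edges_clear:
  "inc_edges (clear I A) u = inc_edges I u \<inter> {e \<in> edges I. \<not> ends I e \<subseteq> A}"
  unfolding inc_edges_def by auto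

lemma wf_inst_clear:
  assumes "wf_inst I"
  shows "wf_inst (clear I A)"
proof -
  let ?E = "{e \<in> edges I. \<not> ends I e \<subseteq> A}"
  have states: "0 \<le> cost I u x \<and> supplies I u x \<inter> ?E \<subseteq> inc_edges I u \<inter> ?E \<and>
      demands (clear I A) u x \<subseteq> inc_edges I u \<inter> ?E" if "u \<in> verts I" "x \<in> doms I u" for u x
  proof -
    have "0 \<le> cost I u x \<and> supplies I u x \<subseteq> inc_edges I u \<and> demands I u x \<subseteq> inc_edges I u"
      using assms that unfolding wf_inst_def by blast
    then show ?thesis by auto
  qed
  have full: "\<exists>x\<in>doms I u. supplies I u x \<inter> ?E = inc_edges I u \<inter> ?E \<and> cost I u x < \<infinity>"
    if "u \<in> verts I" for u
    using assms that unfolding wf_inst_def by (metis (no_types, lifting))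
  show ?thesis
    using assms states full unfolding wf_inst_def inc_edges_clear clear_simps(1-6)
    by (intro conjI ballI) auto
qed

lemma OPT_le_sol_cost: "is_solution I \<phi> \<Longrightarrow> OPT I \<le> sol_cost I \<phi>"
  unfolding OPT_def by (auto intro: INF_lower)

lemma OPT_clear_le: "OPT (clear I A) \<le> OPT I"
  unfolding OPT_def by (rule INF_superset_mono) (auto intro: is_solution_clear)

lemma sol_cost_nonneg: "wf_inst I \<Longrightarrow> is_solution I \<phi> \<Longrightarrow> 0 \<le> sol_cost I \<phi>"
  unfolding wf_inst_def is_solution_def sol_cost_def by (auto intro: sum_nonneg)

lemma OPT_nonneg: "wf_inst I \<Longrightarrow> 0 \<le> OPT I"
  unfolding OPT_def by (auto intro: INF_greatest sol_cost_nonneg)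

lemma full_supply_solution:
  assumes "wf_inst I"
  shows "\<exists>\<phi>. is_solution I \<phi> \<and> sol_cost I \<phi> < \<infinity>"
proof -
  from assms obtain \<phi> where \<phi>: "\<And>u. u \<in> verts I \<Longrightarrow>
      \<phi> u \<in> doms I u \<and> supplies I u (\<phi> u) = inc_edges I u \<and> cost I u (\<phi> u) < \<infinity>"
    unfolding wf_inst_def by metis
  have "is_solution I \<phi>"
    using assms \<phi> unfolding is_solution_def wf_inst_def inc_edges_def by blast
  moreover have "sol_cost I \<phi> < \<infinity>"
    using \<phi> unfolding sol_cost_def by (simp add: less_top[symmetric] sum_Pinfty)
  ultimately show ?thesis by blast
qed

lemma OPT_attained:
  assumes "wf_inst I"
  shows "\<exists>\<phi>. is_solution I \<phi> \<and> sol_cost I \<phi> = OPT I"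
proof -
  let ?costs = "sol_cost I ` {\<phi>. is_solution I \<phi>}"
  have "?costs \<subseteq> sol_cost I ` PiE (verts I) (doms I)"
  proof
    fix c assume "c \<in> ?costs"
    then obtain \<phi> where \<phi>: "is_solution I \<phi>" and c: "c = sol_cost I \<phi>" by auto
    have "restrict \<phi> (verts I) \<in> PiE (verts I) (doms I)"
      using \<phi> unfolding is_solution_def by auto
    moreover have "sol_cost I (restrict \<phi> (verts I)) = c"
      unfolding c sol_cost_def by (intro sum.cong) auto
    ultimately show "c \<in> sol_cost I ` PiE (verts I) (doms I)" by force
  qed
  then have "finite ?costs"
    by (rule finite_subset) (use assms in \<open>auto simp: wf_inst_def intro!: finite_PiE\<close>)
  moreover have "?costs \<noteq> {}" using full_supply_solution[OF assms] by auto
  ultimately have "OPT I \<in> ?costs"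
    unfolding OPT_def using Min_in cInf_eq_Min by (metis (no_types, lifting))
  then show ?thesis by auto
qed

lemma OPT_finite: "wf_inst I \<Longrightarrow> OPT I < \<infinity>"
  using full_supply_solution OPT_le_sol_cost by (metis order.strict_trans1)

definition merge_state :: "('v,'e,'s) gdinst \<Rightarrow> 'v \<Rightarrow> 's \<Rightarrow> 's \<Rightarrow> 's" where
  "merge_state I u x1 x2 = (SOME x. x \<in> doms I u \<and> cost I u x \<le> cost I u x1 + cost I u x2 \<and>
     supplies I u x = supplies I u x1 \<union> supplies I u x2 \<and> demands I u x \<subseteq> demands I u x1)"

lemma merge_state:
  assumes "state_monotonous I u" "x1 \<in> doms I u" "x2 \<in> doms I u"
  defines "x \<equiv> merge_state I u x1 x2"
  shows "x \<in> doms I u" "cost I u x \<le> cost I u x1 + cost I u x2"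
    "supplies I u x = supplies I u x1 \<union> supplies I u x2" "demands I u x \<subseteq> demands I u x1"
proof -
  have "\<exists>x. x \<in> doms I u \<and> cost I u x \<le> cost I u x1 + cost I u x2 \<and>
      supplies I u x = supplies I u x1 \<union> supplies I u x2 \<and> demands I u x \<subseteq> demands I u x1"
    using assms(1-3) unfolding state_monotonous_def by blast
  from someI_ex[OF this] show "x \<in> doms I u" "cost I u x \<le> cost I u x1 + cost I u x2"
    "supplies I u x = supplies I u x1 \<union> supplies I u x2" "demands I u x \<subseteq> demands I u x1"
    unfolding x_def merge_state_def by blast+
qed

text \<open>Inside \<open>A\<close> the demands of \<open>\<phi>\<close> are kept; they stay met because every vertex of
\<open>N[A]\<close> also supplies what it supplies under \<open>\<phi>\<close>. Elsewhere the demands of \<open>\<psi>\<close> are kept.\<close>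

definition patch :: "('v,'e,'s) gdinst \<Rightarrow> 'v set \<Rightarrow> ('v \<Rightarrow> 's) \<Rightarrow> ('v \<Rightarrow> 's) \<Rightarrow> 'v \<Rightarrow> 's" where
  "patch I A \<phi> \<psi> u =
     (if u \<in> A then merge_state I u (\<phi> u) (\<psi> u)
      else if u \<in> closed_nbhd I A then merge_state I u (\<psi> u) (\<phi> u) else \<psi> u)"

context
  fixes I :: "('v,'e,'s) gdinst" and A :: "'v set" and \<phi> \<psi> :: "'v \<Rightarrow> 's"
  assumes mono: "\<forall>u\<in>verts I. state_monotonous I u"
    and \<phi>: "is_solution I \<phi>" and \<psi>: "is_solution (clear I A) \<psi>"
begin

private lemma patch_state:
  assumes u: "u \<in> verts I"
  shows "patch I A \<phi> \<psi> u \<in> doms I u"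
    and "supplies I u (\<psi> u) \<subseteq> supplies I u (patch I A \<phi> \<psi> u)"
    and "u \<in> closed_nbhd I A \<Longrightarrow> supplies I u (\<phi> u) \<subseteq> supplies I u (patch I A \<phi> \<psi> u)"
    and "u \<in> A \<Longrightarrow> demands I u (patch I A \<phi> \<psi> u) \<subseteq> demands I u (\<phi> u)"
    and "u \<notin> A \<Longrightarrow> demands I u (patch I A \<phi> \<psi> u) \<subseteq> demands I u (\<psi> u)"
    and "cost I u (patch I A \<phi> \<psi> u)
           \<le> cost I u (\<psi> u) + (if u \<in> closed_nbhd I A then cost I u (\<phi> u) else 0)"
proof -
  have "\<phi> u \<in> doms I u" "\<psi> u \<in> doms I u"
    using \<phi> \<psi> u unfolding is_solution_def by auto
  note m1 = merge_state[OF mono[rule_format, OF u] this]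
    and m2 = merge_state[OF mono[rule_format, OF u] this(2,1)]
  have "A \<subseteq> closed_nbhd I A" unfolding closed_nbhd_def by auto
  then show "patch I A \<phi> \<psi> u \<in> doms I u"
    and "supplies I u (\<psi> u) \<subseteq> supplies I u (patch I A \<phi> \<psi> u)"
    and "u \<in> closed_nbhd I A \<Longrightarrow> supplies I u (\<phi> u) \<subseteq> supplies I u (patch I A \<phi> \<psi> u)"
    and "u \<in> A \<Longrightarrow> demands I u (patch I A \<phi> \<psi> u) \<subseteq> demands I u (\<phi> u)"
    and "u \<notin> A \<Longrightarrow> demands I u (patch I A \<phi> \<psi> u) \<subseteq> demands I u (\<psi> u)"
    and "cost I u (patch I A \<phi> \<psi> u)
           \<le> cost I u (\<psi> u) + (if u \<in> closed_nbhd I A then cost I u (\<phi> u) else 0)"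
    using m1 m2 \<open>\<psi> u \<in> doms I u\<close> unfolding patch_def by (auto simp: add.commute)
qed

lemma patch_is_solution:
  assumes "wf_inst I"
  shows "is_solution I (patch I A \<phi> \<psi>)"
  unfolding is_solution_def
proof (intro conjI ballI impI)
  fix u assume "u \<in> verts I"
  then show "patch I A \<phi> \<psi> u \<in> doms I u" by (rule patch_state)
next
  fix e u v assume e: "e \<in> edges I" and uv: "u \<in> ends I e" "v \<in> ends I e" "u \<noteq> v"
    and dem: "e \<in> demands I u (patch I A \<phi> \<psi> u)"
  have ends: "ends I e \<subseteq> verts I" using assms e unfolding wf_inst_def by auto
  show "e \<in> supplies I v (patch I A \<phi> \<psi> v)"
  proof (cases "u \<in> A")
    case True
    then have "e \<in> supplies I v (\<phi> v)"
      using \<phi> e uv dem patch_state(4) ends unfolding is_solution_def by blast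
    moreover have "v \<in> closed_nbhd I A"
      using True e uv ends unfolding closed_nbhd_def by auto
    ultimately show ?thesis using patch_state(3) ends uv by blast
  next
    case False
    then have "e \<in> demands (clear I A) u (\<psi> u)" "e \<in> edges (clear I A)"
      using patch_state(5) dem e uv ends by auto
    then have "e \<in> supplies I v (\<psi> v)"
      using \<psi> uv unfolding is_solution_def by auto
    then show ?thesis using patch_state(2) ends uv by blast
  qed
qed

lemma sol_cost_patch_le:
  assumes "wf_inst I" "A \<subseteq> verts I"
  shows "sol_cost I (patch I A \<phi> \<psi>)
           \<le> sol_cost (clear I A) \<psi> + (\<Sum>u\<in>closed_nbhd I A. cost I u (\<phi> u))"
proof -
  let ?N = "closed_nbhd I A"
  have fin: "finite (verts I)" using assms(1) unfolding wf_inst_def by auto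
  have "?N \<subseteq> verts I" using assms(2) unfolding closed_nbhd_def by auto
  have "sol_cost I (patch I A \<phi> \<psi>)
      \<le> (\<Sum>u\<in>verts I. cost I u (\<psi> u) + (if u \<in> ?N then cost I u (\<phi> u) else 0))"
    unfolding sol_cost_def by (intro sum_mono patch_state(6))
  also have "\<dots> = sol_cost (clear I A) \<psi> + (\<Sum>u\<in>verts I. if u \<in> ?N then cost I u (\<phi> u) else 0)"
    by (simp add: sum.distrib sol_cost_def)
  also have "(\<Sum>u\<in>verts I. if u \<in> ?N then cost I u (\<phi> u) else 0) = (\<Sum>u\<in>?N. cost I u (\<phi> u))"
    using sum.inter_restrict[OF fin, of "\<lambda>u. cost I u (\<phi> u)" ?N] \<open>?N \<subseteq> verts I\<close>
    by (simp add: Int_absorb1)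
  finally show ?thesis .
qed

end

lemma OPT_le_OPT_clear_plus_nbhd_cost:
  assumes wf: "wf_inst I" and mono: "\<forall>u\<in>verts I. state_monotonous I u"
    and A: "A \<subseteq> verts I" and \<phi>: "is_solution I \<phi>"
  shows "OPT I \<le> OPT (clear I A) + (\<Sum>u\<in>closed_nbhd I A. cost I u (\<phi> u))"
proof -
  obtain \<psi> where \<psi>: "is_solution (clear I A) \<psi>" and opt: "sol_cost (clear I A) \<psi> = OPT (clear I A)"
    using OPT_attained[OF wf_inst_clear[OF wf]] by blast
  have "OPT I \<le> sol_cost I (patch I A \<phi> \<psi>)"
    by (intro OPT_le_sol_cost patch_is_solution mono \<phi> \<psi> wf)
  also have "\<dots> \<le> OPT (clear I A) + (\<Sum>u\<in>closed_nbhd I A. cost I u (\<phi> u))"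
    using sol_cost_patch_le[OF mono \<phi> \<psi> wf A] opt by simp
  finally show ?thesis .
qed

lemma optimal_solution_real_costs:
  assumes wf: "wf_inst I"
  obtains \<phi> w where "is_solution I \<phi>" "\<forall>u\<in>verts I. cost I u (\<phi> u) = ereal (w u) \<and> 0 \<le> w u"
    "OPT I = ereal (\<Sum>u\<in>verts I. w u)"
proof -
  obtain \<phi> where \<phi>: "is_solution I \<phi>" and opt: "sol_cost I \<phi> = OPT I"
    using OPT_attained[OF wf] by blast
  have fin: "finite (verts I)" using wf unfolding wf_inst_def by auto
  define w where "w u = real_of_ereal (cost I u (\<phi> u))" for u
  have nonneg: "0 \<le> cost I u (\<phi> u)" if "u \<in> verts I" for u
    using wf \<phi> that unfolding wf_inst_def is_solution_def by auto
  have "sol_cost I \<phi> \<noteq> \<infinity>" using OPT_finite[OF wf] opt by simp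
  then have "cost I u (\<phi> u) \<noteq> \<infinity>" if "u \<in> verts I" for u
    using fin that unfolding sol_cost_def sum_Pinfty by blast
  then have cost: "cost I u (\<phi> u) = ereal (w u)" "0 \<le> w u" if "u \<in> verts I" for u
    using nonneg[OF that] that unfolding w_def by (cases "cost I u (\<phi> u)"; simp)+
  have "OPT I = ereal (\<Sum>u\<in>verts I. w u)"
    by (simp add: opt[symmetric] sol_cost_def cost)
  with \<phi> cost show thesis by (intro that) auto
qed

lemma sum_disjoint_family_le:
  fixes f :: "'a \<Rightarrow> 'b::ordered_comm_monoid_add"
  assumes "finite V" "\<And>i. i \<in> J \<Longrightarrow> N i \<subseteq> V" "finite J"
    and "\<And>i j. i \<in> J \<Longrightarrow> j \<in> J \<Longrightarrow> i \<noteq> j \<Longrightarrow> N i \<inter> N j = {}"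
    and "\<And>u. u \<in> V \<Longrightarrow> 0 \<le> f u"
  shows "(\<Sum>i\<in>J. \<Sum>u\<in>N i. f u) \<le> (\<Sum>u\<in>V. f u)"
proof -
  have "(\<Sum>i\<in>J. \<Sum>u\<in>N i. f u) = (\<Sum>u\<in>(\<Union>i\<in>J. N i). f u)"
    using assms(1-4) by (intro sum.UNION_disjoint[symmetric]) (auto intro: finite_subset)
  also have "\<dots> \<le> (\<Sum>u\<in>V. f u)"
    using assms by (intro sum_mono2) auto
  finally show ?thesis .
qed

lemma exists_le_average:
  fixes c :: "nat \<Rightarrow> real"
  assumes "0 < k" "(\<Sum>i<k. c i) \<le> S"
  obtains i where "i < k" "c i \<le> S / real k"
proof (rule ccontr)
  assume "\<not> thesis"
  then have "\<forall>i<k. S / real k < c i" using that by force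
  then have "(\<Sum>i<k. S / real k) < (\<Sum>i<k. c i)"
    using assms(1) by (intro sum_strict_mono) auto
  with assms show False by simp
qed

lemma one_minus_sum_mult_le:
  fixes a b x y :: real
  assumes "0 \<le> a" "a \<le> 1" "0 \<le> b" "0 \<le> y" "y \<le> x + b * y"
  shows "(1 - (a + b)) * y \<le> (1 - a) * x"
proof -
  have "(1 - a) * ((1 - b) * y) \<le> (1 - a) * x"
    using assms by (intro mult_left_mono) (auto simp: algebra_simps)
  moreover have "(1 - (a + b)) * y \<le> (1 - a) * ((1 - b) * y)"
    using assms by (simp add: algebra_simps)
  ultimately show ?thesis by linarith
qed

lemma exists_clear_near_OPT:
  assumes wf: "wf_inst I" and mono: "\<forall>u\<in>verts I. state_monotonous I u"
    and V: "\<forall>i<k. Vs i \<subseteq> verts I"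
    and disj: "\<forall>i<k. \<forall>j<k. i \<noteq> j \<longrightarrow> closed_nbhd I (Vs i) \<inter> closed_nbhd I (Vs j) = {}"
    and "0 < k"
  obtains i Opt Opt_i where "i < k" "OPT I = ereal Opt" "0 \<le> Opt"
    "OPT (clear I (Vs i)) = ereal Opt_i" "Opt \<le> Opt_i + Opt / real k"
proof -
  obtain \<phi> w where \<phi>: "is_solution I \<phi>"
      and w: "\<forall>u\<in>verts I. cost I u (\<phi> u) = ereal (w u) \<and> 0 \<le> w u"
      and opt: "OPT I = ereal (\<Sum>u\<in>verts I. w u)"
    using optimal_solution_real_costs[OF wf] .
  define Opt where "Opt = (\<Sum>u\<in>verts I. w u)"
  define c where "c i = (\<Sum>u\<in>closed_nbhd I (Vs i). w u)" for i
  have nbhd: "closed_nbhd I (Vs i) \<subseteq> verts I" if "i < k" for i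
    using V that unfolding closed_nbhd_def by auto
  have "(\<Sum>i<k. c i) \<le> Opt"
    unfolding c_def Opt_def
  proof (rule sum_disjoint_family_le)
    show "finite (verts I)" using wf unfolding wf_inst_def by blast
  qed (use disj nbhd w in auto)
  then obtain i where i: "i < k" "c i \<le> Opt / real k"
    using exists_le_average[OF \<open>0 < k\<close>] by blast
  have "OPT I \<le> OPT (clear I (Vs i)) + ereal (c i)"
    using OPT_le_OPT_clear_plus_nbhd_cost[OF wf mono V[rule_format, OF i(1)] \<phi>] nbhd[OF i(1)] w
    by (simp add: c_def subset_iff)
  moreover have "0 \<le> OPT (clear I (Vs i))" "OPT (clear I (Vs i)) \<le> OPT I"
    using OPT_nonneg[OF wf_inst_clear[OF wf]] OPT_clear_le by blast+
  ultimately obtain Opt_i where "OPT (clear I (Vs i)) = ereal Opt_i" "Opt \<le> Opt_i + c i"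
    using opt Opt_def by (cases "OPT (clear I (Vs i))") auto
  moreover have "0 \<le> Opt" unfolding Opt_def using w by (auto intro: sum_nonneg)
  ultimately show thesis
    using that[of i Opt Opt_i] i opt Opt_def by simp
qed

theorem lemma4p10:
  fixes I :: "('v,'e,'s) gdinst" and L q s d :: nat and \<delta> :: real
    and Vs :: "nat \<Rightarrow> 'v set" and p :: "nat \<Rightarrow> real" and k :: nat
  assumes "L \<ge> 1" and "2 \<le> q" and "q \<le> L"
    and "0 < \<delta>" and "\<delta> < 1"
    and k_def: "k = nat \<lceil>real L / \<delta>\<rceil>"
    and "s \<ge> 1" and "d \<ge> 1"
    and "wf_inst I" and "decent s d I"
    and "\<forall>i<k. Vs i \<subseteq> verts I"
    and "\<forall>i<k. \<forall>j<k. i \<noteq> j \<longrightarrow> closed_nbhd I (Vs i) \<inter> closed_nbhd I (Vs j) = {}"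
    and "\<forall>i<k. ereal (1 - \<delta> * (real q - 1) / real L) * OPT (clear I (Vs i)) \<le> ereal (p i)
              \<and> ereal (p i) \<le> OPT (clear I (Vs i))"
  shows "ereal (1 - \<delta> * real q / real L) * OPT I \<le> ereal (Max (p ` {..<k}))
         \<and> ereal (Max (p ` {..<k})) \<le> OPT I"
proof -
  note p = assms(13)
  have mono: "\<forall>u\<in>verts I. state_monotonous I u" using assms(10) unfolding decent_def by blast
  have L: "0 < real L" using assms(1) by simp
  have k: "real L / \<delta> \<le> real k" "0 < k"
    using assms(1,4) k_def by (simp_all add: le_of_int_ceiling)
  obtain i Opt Opt_i where i: "i < k" and opt: "OPT I = ereal Opt" "0 \<le> Opt"
      and opt_i: "OPT (clear I (Vs i)) = ereal Opt_i" "Opt \<le> Opt_i + Opt / real k"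
    using exists_clear_near_OPT[OF assms(9) mono assms(11,12) k(2)] by blast
  have "real L \<le> \<delta> * real k"
    using k(1) assms(4) by (simp add: divide_le_eq mult.commute)
  then have "Opt / real k \<le> \<delta> / real L * Opt"
    using k(2) L opt(2) by (simp add: field_simps mult_left_mono)
  have "\<delta> * (real q - 1) \<le> real q - 1"
    using assms(2,4,5) by (intro mult_left_le_one_le) auto
  then have "\<delta> * (real q - 1) / real L \<le> 1" using assms(3) L by simp
  moreover have "\<delta> * (real q - 1) / real L + \<delta> / real L = \<delta> * real q / real L"
    by (simp add: add_divide_distrib[symmetric] algebra_simps)
  ultimately have "(1 - \<delta> * real q / real L) * Opt \<le> (1 - \<delta> * (real q - 1) / real L) * Opt_i"
    using one_minus_sum_mult_le[of "\<delta> * (real q - 1) / real L" "\<delta> / real L" Opt Opt_i]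
      assms(2,4) L opt(2) opt_i(2) \<open>Opt / real k \<le> \<delta> / real L * Opt\<close> by simp
  also have "\<dots> \<le> p i" using p i opt_i(1) by auto
  also have "p i \<le> Max (p ` {..<k})" using i by (auto intro: Max_ge)
  finally have lower: "(1 - \<delta> * real q / real L) * Opt \<le> Max (p ` {..<k})" .
  have "Max (p ` {..<k}) \<in> p ` {..<k}" using k(2) by (intro Max_in) auto
  then obtain j where "j < k" "Max (p ` {..<k}) = p j" by auto
  then have "ereal (Max (p ` {..<k})) \<le> OPT I"
    using p OPT_clear_le[of I "Vs j"] by (metis order.trans)
  with lower show ?thesis using opt by simp
qed

end
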